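(* Let $L>0$, $N\ge1$, and let $x=(x_1,\dots,x_{2N})\in(\mathbb{R}_{>0})^{2N}$ satisfy the highest weight condition and $\sum_{i=1}^{2N}x_i\le L$. Run Algorithm II from $x^{(1)}=x$, and let $u$, $\mu^{(i)}$, $\nu^{(i)}$, $y^{(i)}$ and the runs of zeros be as produced there. Put $\lambda^{(i)}=\sum_{l=1}^i\mu^{(l)}$ and $$q_i=L-2\sum_{k=1}^{u}\min(\lambda^{(i)},\lambda^{(k)})\,\nu^{(k)}\qquad(1\le i\le u).$$ For $1\le i\le u$ and $1\le j\le k^{(i)}$ let $I^{(i)}_j$ be the position in $y^{(i)}$ of the first entry of the $j$th run of zeros, and $r^{(i)}_j=\sum_{l=1}^{I^{(i)}_j-1}y^{(i)}_l$. Then $0\le r^{(i)}_j\le q_i$ for all $1\le i\le u$ and $1\le j\le k^{(i)}$.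
   Context: Highest weight condition: a sequence $x_1,\dots,x_{2n}$ of nonnegative reals satisfies it if $\sum_{i=1}^k(x_{2i-1}-x_{2i})\ge0$ for all $1\le k\le n$. Algorithm II. Set $N^{(1)}=N$, $x^{(1)}=x$. Given $x^{(i)}=(x^{(i)}_1,\dots,x^{(i)}_{2N^{(i)}})$ of positive reals satisfying the highest weight condition: let $\mu^{(i)}=\min_j x^{(i)}_j$ and $y^{(i)}_j=x^{(i)}_j-\mu^{(i)}$. In the (linear, non-cyclic) array $y^{(i)}_1,\dots,y^{(i)}_{2N^{(i)}}$ consider the maximal runs of consecutive zeros (a lone zero counts as a run); say there are $k^{(i)}$ runs, numbered $1,\dots,k^{(i)}$ from left to right, with lengths $n^{(i)}_1,\dots,n^{(i)}_{k^{(i)}}$. Let $N^{(i+1)}=N^{(i)}-\sum_{j}\lceil n^{(i)}_j/2\rceil$ and $\nu^{(i)}=N^{(i)}-N^{(i+1)}$. If $N^{(i+1)}=0$, stop and set $u=i$. Otherwise form $x^{(i+1)}$ from $y^{(i)}$: (a) if a run of zeros is at the left end, delete it; (b) for every run of zeros lying between positive entries $a,b$, delete the zeros if the run length is even, and if odd delete the zeros and also replace $a,b$ by the single entry $a+b$; (c') if a run of zeros is at the right end, preceded by a positive entry $a$, delete the zeros, and if its length is odd also delete $a$. Repeat with $x^{(i+1)}$. *)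

theory Defs
  imports Complex_Main
begin

text \<open>Sequences are real lists; paper position l (1-based) is list index l-1.\<close>

definition hw_cond :: "real list \<Rightarrow> bool" where
  "hw_cond xs \<longleftrightarrow>
     (\<forall>k. 1 \<le> k \<and> k \<le> length xs div 2 \<longrightarrow>
        (\<Sum>i=1..k. xs ! (2*i-2) - xs ! (2*i-1)) \<ge> 0)"

definition alg_mu :: "real list \<Rightarrow> real" where
  "alg_mu xs = Min (set xs)"

definition alg_y :: "real list \<Rightarrow> real list" where
  "alg_y xs = map (\<lambda>a. a - alg_mu xs) xs"

definition run_starts :: "real list \<Rightarrow> nat list" where
  "run_starts ys = filter (\<lambda>p. ys ! p = 0 \<and> (p = 0 \<or> ys ! (p - 1) \<noteq> 0)) [0..<length ys]"

definition run_len :: "real list \<Rightarrow> nat \<Rightarrow> nat" where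
  "run_len ys p = length (takeWhile (\<lambda>a. a = 0) (drop p ys))"

definition alg_nu :: "real list \<Rightarrow> nat" where
  "alg_nu ys = (\<Sum>p \<leftarrow> run_starts ys. (run_len ys p + 1) div 2)"

text \<open>Rules (b) and (c'), applied left to right to a list starting with a positive entry
  (merges chain; on the right end the preceding (possibly merged) entry is deleted).\<close>
function alg_merge :: "real list \<Rightarrow> real list" where
  "alg_merge [] = []"
| "alg_merge (a # rest) =
     (if length (takeWhile (\<lambda>v. v = 0) rest) = 0 then a # alg_merge rest
      else if drop (length (takeWhile (\<lambda>v. v = 0) rest)) rest = [] then
        (if odd (length (takeWhile (\<lambda>v. v = 0) rest)) then [] else [a])
      else if even (length (takeWhile (\<lambda>v. v = 0) rest)) then
        a # alg_merge (drop (length (takeWhile (\<lambda>v. v = 0) rest)) rest)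
      else alg_merge ((a + hd (drop (length (takeWhile (\<lambda>v. v = 0) rest)) rest))
                      # tl (drop (length (takeWhile (\<lambda>v. v = 0) rest)) rest)))"
  by pat_completeness auto
termination
  by (relation "measure length") auto

text \<open>Rule (a) followed by (b), (c'): from y^(i) to x^(i+1).\<close>
definition alg_next :: "real list \<Rightarrow> real list" where
  "alg_next ys = alg_merge (dropWhile (\<lambda>a. a = 0) ys)"

definition alg_x :: "real list \<Rightarrow> nat \<Rightarrow> real list" where
  "alg_x x i = ((alg_next \<circ> alg_y) ^^ (i - 1)) x"

primrec alg_N0 :: "nat \<Rightarrow> real list \<Rightarrow> nat \<Rightarrow> int" where
  "alg_N0 N x 0 = int N"
| "alg_N0 N x (Suc k) = alg_N0 N x k - int (alg_nu (alg_y (alg_x x (Suc k))))"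

definition alg_N :: "nat \<Rightarrow> real list \<Rightarrow> nat \<Rightarrow> int" where
  "alg_N N x i = alg_N0 N x (i - 1)"

definition alg_stop :: "nat \<Rightarrow> real list \<Rightarrow> nat \<Rightarrow> bool" where
  "alg_stop N x u \<longleftrightarrow> 1 \<le> u \<and> alg_N N x (u + 1) = 0 \<and>
     (\<forall>i. 1 \<le> i \<and> i < u \<longrightarrow> alg_N N x (i + 1) \<noteq> 0)"

definition alg_lambda :: "real list \<Rightarrow> nat \<Rightarrow> real" where
  "alg_lambda x i = (\<Sum>l=1..i. alg_mu (alg_x x l))"

definition alg_q :: "real \<Rightarrow> real list \<Rightarrow> nat \<Rightarrow> nat \<Rightarrow> real" where
  "alg_q L x u i = L - 2 * (\<Sum>k=1..u. min (alg_lambda x i) (alg_lambda x k)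
                               * real (alg_nu (alg_y (alg_x x k))))"

end

theory Submission
  imports Defs
begin

text \<open>Every prefix sum of \<open>y\<^sup>(\<^sup>i\<^sup>)\<close> lies between \<open>0\<close> and the total sum of \<open>y\<^sup>(\<^sup>i\<^sup>)\<close>,
  so it suffices to bound the latter. Passing from \<open>x\<^sup>(\<^sup>l\<^sup>)\<close> to \<open>y\<^sup>(\<^sup>l\<^sup>)\<close> lowers the sum by
  \<open>\<mu>\<^sup>(\<^sup>l\<^sup>)\<close> times the length of \<open>x\<^sup>(\<^sup>l\<^sup>)\<close>, and the deletions and merges leading to
  \<open>x\<^sup>(\<^sup>l\<^sup>+\<^sup>1\<^sup>)\<close> never raise it. Each step removes at most \<open>2\<nu>\<^sup>(\<^sup>l\<^sup>)\<close> entries, so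
  \<open>x\<^sup>(\<^sup>l\<^sup>)\<close> still has at least \<open>2N\<^sup>(\<^sup>l\<^sup>)\<close> entries, where \<open>N\<^sup>(\<^sup>l\<^sup>) = \<Sum>\<^sub>k\<^sub>\<ge>\<^sub>l \<nu>\<^sup>(\<^sup>k\<^sup>)\<close>.
  Hence \<open>\<Sum> y\<^sup>(\<^sup>i\<^sup>) \<le> L - 2 \<Sum>\<^sub>l\<^sub>\<le>\<^sub>i \<mu>\<^sup>(\<^sup>l\<^sup>) N\<^sup>(\<^sup>l\<^sup>)\<close>, and summation by parts turns
  the right-hand side into \<open>q\<^sub>i\<close>.\<close>

lemma run_len_Cons_0: "run_len (a # ys) 0 = (if a = 0 then Suc (run_len ys 0) else 0)"
  by (simp add: run_len_def)

lemma run_len_Cons_Suc: "run_len (a # ys) (Suc p) = run_len ys p"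
  by (simp add: run_len_def)

lemma run_starts_Cons:
  "run_starts (a # ys) =
     (if a = 0 then 0 # map Suc (filter (\<lambda>p. p \<noteq> 0) (run_starts ys)) else map Suc (run_starts ys))"
proof -
  have "[0..<length (a # ys)] = 0 # map Suc [0..<length ys]"
    by (simp add: upt_conv_Cons map_Suc_upt del: upt_Suc)
  then show ?thesis
    unfolding run_starts_def by (auto simp: filter_map o_def nth_Cons' intro!: filter_cong)
qed

text \<open>Splitting off the runs that do not start at the first entry makes \<^const>\<open>alg_nu\<close>
  recursive along the list.\<close>

definition nu_later_runs :: "real list \<Rightarrow> nat" where
  "nu_later_runs ys =
     (\<Sum>p \<leftarrow> filter (\<lambda>p. p \<noteq> 0) (run_starts ys). (run_len ys p + 1) div 2)"

lemma nu_later_runs_Nil: "nu_later_runs [] = 0"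
  by (simp add: nu_later_runs_def run_starts_def)

lemma nu_later_runs_Cons: "nu_later_runs (a # ys) = (if a = 0 then nu_later_runs ys else alg_nu ys)"
  by (simp add: nu_later_runs_def alg_nu_def run_starts_Cons filter_map o_def run_len_Cons_Suc)

lemma alg_nu_eq_first_run: "alg_nu ys = (run_len ys 0 + 1) div 2 + nu_later_runs ys"
proof (cases ys)
  case Nil
  then show ?thesis by (simp add: alg_nu_def nu_later_runs_Nil run_starts_def run_len_def)
next
  case (Cons a ys')
  then show ?thesis
    by (simp add: nu_later_runs_def alg_nu_def run_starts_Cons filter_map o_def
        run_len_Cons_Suc run_len_Cons_0)
qed

lemma nu_later_runs_zeros_append: "\<forall>v\<in>set zs. v = 0 \<Longrightarrow> nu_later_runs (zs @ ys) = nu_later_runs ys"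
  by (induction zs) (auto simp: nu_later_runs_Cons)

lemma alg_nu_split_leading_zeros:
  fixes ys :: "real list"
  defines "n \<equiv> length (takeWhile (\<lambda>v. v = 0) ys)"
  shows "alg_nu ys = (n + 1) div 2 + (case drop n ys of [] \<Rightarrow> 0 | b # r \<Rightarrow> alg_nu r)"
proof -
  have ys: "ys = takeWhile (\<lambda>v. v = 0) ys @ drop n ys"
    unfolding n_def by (simp add: dropWhile_eq_drop[symmetric])
  have head: "hd (drop n ys) \<noteq> 0" if "drop n ys \<noteq> []"
    using that hd_dropWhile[of "\<lambda>v. v = 0" ys] unfolding n_def by (simp add: dropWhile_eq_drop)
  have "nu_later_runs ys = nu_later_runs (drop n ys)"
    by (subst ys) (meson nu_later_runs_zeros_append set_takeWhileD)
  also have "\<dots> = (case drop n ys of [] \<Rightarrow> 0 | b # r \<Rightarrow> alg_nu r)"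
    using head by (cases "drop n ys") (auto simp: nu_later_runs_Nil nu_later_runs_Cons)
  finally show ?thesis
    by (simp add: alg_nu_eq_first_run run_len_def n_def)
qed

lemma length_takeWhile_plus_drop:
  "length ys = length (takeWhile P ys) + length (drop (length (takeWhile P ys)) ys)"
  using length_takeWhile_le[of P ys] by simp

lemma sum_list_drop_leading_zeros:
  fixes ys :: "real list"
  shows "sum_list (drop (length (takeWhile (\<lambda>v. v = 0) ys)) ys) = sum_list ys"
  by (induction ys) auto

declare alg_merge.simps(2)[simp del]

lemma alg_merge_Cons:
  fixes rest :: "real list"
  defines "n \<equiv> length (takeWhile (\<lambda>v. v = 0) rest)"
  shows "alg_merge (a # rest) =
     (if n = 0 then a # alg_merge rest
      else if drop n rest = [] then (if odd n then [] else [a])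
      else if even n then a # alg_merge (drop n rest)
      else alg_merge ((a + hd (drop n rest)) # tl (drop n rest)))"
  unfolding n_def by (rule alg_merge.simps(2))

text \<open>Each run of zeros that is deleted removes at most \<open>2 \<lceil>n/2\<rceil>\<close> entries (the zeros and, for
  odd runs, one neighbour).\<close>

lemma length_alg_merge: "xs \<noteq> [] \<Longrightarrow> length xs \<le> length (alg_merge xs) + 2 * alg_nu (tl xs)"
proof (induction xs rule: alg_merge.induct)
  case 1
  then show ?case by simp
next
  case (2 a rest)
  define n where "n = length (takeWhile (\<lambda>v. v = 0) rest)"
  note nu = alg_nu_split_leading_zeros[of rest, folded n_def]
  note len = length_takeWhile_plus_drop[where P="\<lambda>v. v = 0" and ys=rest, folded n_def]
  note merge = alg_merge_Cons[of a rest, folded n_def]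
  show ?case
  proof (cases "n = 0")
    case True
    then show ?thesis
      using "2.IH"(1)[folded n_def] merge nu by (cases rest) auto
  next
    case False
    show ?thesis
    proof (cases "drop n rest")
      case Nil
      with False merge nu len show ?thesis by auto
    next
      case (Cons b r)
      with nu len have "alg_nu rest = (n + 1) div 2 + alg_nu r" "length rest = n + Suc (length r)"
        by auto
      moreover note "2.IH"(2,3)[folded n_def]
      ultimately show ?thesis
        using False Cons merge by (cases "even n") (auto elim!: evenE oddE)
    qed
  qed
qed

lemma alg_merge_nonneg_sum_le:
  "\<forall>v\<in>set xs. 0 \<le> v \<Longrightarrow> (\<forall>v\<in>set (alg_merge xs). 0 \<le> v) \<and> sum_list (alg_merge xs) \<le> sum_list xs"
proof (induction xs rule: alg_merge.induct)
  case 1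
  then show ?case by simp
next
  case (2 a rest)
  define n where "n = length (takeWhile (\<lambda>v. v = 0) rest)"
  note sum = sum_list_drop_leading_zeros[of rest, folded n_def]
  note merge = alg_merge_Cons[of a rest, folded n_def]
  have a: "0 \<le> a" and rest: "\<forall>v\<in>set rest. 0 \<le> v" using "2.prems" by auto
  then have drop: "\<forall>v\<in>set (drop n rest). 0 \<le> v" by (meson in_set_dropD)
  show ?case
  proof (cases "n = 0")
    case True
    with "2.IH"(1)[folded n_def] a rest merge show ?thesis by simp
  next
    case False
    show ?thesis
    proof (cases "drop n rest")
      case Nil
      with False merge a rest show ?thesis by (auto simp: sum_list_nonneg)
    next
      case (Cons b r)
      show ?thesis
      proof (cases "even n")
        case True
        with "2.IH"(2)[folded n_def] False Cons merge sum drop a show ?thesis by auto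
      next
        case odd: False
        have "\<forall>v\<in>set ((a + b) # r). 0 \<le> v" using drop a Cons by auto
        with odd "2.IH"(3)[folded n_def] False Cons merge sum show ?thesis by auto
      qed
    qed
  qed
qed

lemma alg_next_eq_alg_merge:
  "alg_next ys = alg_merge (drop (length (takeWhile (\<lambda>v. v = 0) ys)) ys)"
  by (simp add: alg_next_def dropWhile_eq_drop)

lemma length_alg_next: "length ys \<le> length (alg_next ys) + 2 * alg_nu ys"
proof -
  define n where "n = length (takeWhile (\<lambda>v. v = 0) ys)"
  note nu = alg_nu_split_leading_zeros[of ys, folded n_def]
  note len = length_takeWhile_plus_drop[where P="\<lambda>v. v = 0" and ys=ys, folded n_def]
  show ?thesis
  proof (cases "drop n ys")
    case Nil
    with nu len show ?thesis by auto
  next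
    case (Cons b r)
    with length_alg_merge[of "b # r"] nu len alg_next_eq_alg_merge[of ys, folded n_def]
    show ?thesis by auto
  qed
qed

lemma alg_next_nonneg_sum_le:
  fixes ys :: "real list"
  assumes "\<forall>v\<in>set ys. 0 \<le> v"
  shows "(\<forall>v\<in>set (alg_next ys). 0 \<le> v) \<and> sum_list (alg_next ys) \<le> sum_list ys"
  using alg_merge_nonneg_sum_le[of "drop (length (takeWhile (\<lambda>v. v = 0) ys)) ys"] assms
  by (simp add: alg_next_eq_alg_merge sum_list_drop_leading_zeros in_set_dropD)

lemma alg_y_nonneg: "\<forall>v\<in>set (alg_y xs). 0 \<le> v"
  by (auto simp: alg_y_def alg_mu_def)

lemma sum_list_alg_y: "sum_list (alg_y xs) = sum_list xs - real (length xs) * alg_mu xs"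
  by (simp add: alg_y_def sum_list_subtractf sum_list_triv)

lemma alg_mu_nonneg: "xs \<noteq> [] \<Longrightarrow> \<forall>v\<in>set xs. 0 \<le> v \<Longrightarrow> 0 \<le> alg_mu xs"
  by (simp add: alg_mu_def)

abbreviation alg_mu_at :: "real list \<Rightarrow> nat \<Rightarrow> real" where
  "alg_mu_at x l \<equiv> alg_mu (alg_x x l)"

abbreviation alg_nu_at :: "real list \<Rightarrow> nat \<Rightarrow> nat" where
  "alg_nu_at x k \<equiv> alg_nu (alg_y (alg_x x k))"

lemma alg_x_1 [simp]: "alg_x x 1 = x" "alg_x x (Suc 0) = x"
  by (simp_all add: alg_x_def)

lemma alg_x_Suc: "1 \<le> l \<Longrightarrow> alg_x x (Suc l) = alg_next (alg_y (alg_x x l))"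
  by (cases l) (simp_all add: alg_x_def)

lemma alg_x_nonneg:
  assumes "\<forall>v\<in>set x. 0 \<le> v" and "1 \<le> l"
  shows "\<forall>v\<in>set (alg_x x l). 0 \<le> v"
  using assms(2)
proof (induction l rule: nat_induct_at_least)
  case base
  then show ?case using assms(1) by simp
next
  case (Suc l)
  then show ?case using alg_next_nonneg_sum_le[OF alg_y_nonneg] by (simp add: alg_x_Suc)
qed

lemma length_alg_x:
  "1 \<le> l \<Longrightarrow> length x \<le> length (alg_x x l) + 2 * (\<Sum>k=1..<l. alg_nu_at x k)"
proof (induction l rule: nat_induct_at_least)
  case base
  then show ?case by simp
next
  case (Suc l)
  have "length (alg_x x l) \<le> length (alg_x x (Suc l)) + 2 * alg_nu_at x l"
    using length_alg_next[of "alg_y (alg_x x l)"] Suc.hyps by (simp add: alg_x_Suc alg_y_def)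
  with Suc show ?case by simp
qed

lemma sum_list_alg_y_alg_x:
  assumes "\<forall>v\<in>set x. 0 \<le> v" and "1 \<le> i"
  shows "sum_list (alg_y (alg_x x i)) + (\<Sum>l=1..i. real (length (alg_x x l)) * alg_mu_at x l)
           \<le> sum_list x"
  using assms(2)
proof (induction i rule: nat_induct_at_least)
  case base
  then show ?case by (simp add: sum_list_alg_y)
next
  case (Suc i)
  have "sum_list (alg_x x (Suc i)) \<le> sum_list (alg_y (alg_x x i))"
    using alg_next_nonneg_sum_le[OF alg_y_nonneg] Suc.hyps by (simp add: alg_x_Suc)
  with Suc show ?case by (simp add: sum_list_alg_y)
qed

lemma alg_N_eq: "alg_N N x l = int N - int (\<Sum>k=1..<l. alg_nu_at x k)"
proof -
  have "alg_N0 N x l = int N - int (\<Sum>k=1..<Suc l. alg_nu_at x k)" for l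
    by (induction l) simp_all
  then show ?thesis by (cases l) (simp_all add: alg_N_def)
qed

lemma sum_atLeastAtMost_split:
  "m \<le> l \<Longrightarrow> l \<le> Suc u \<Longrightarrow> (\<Sum>k=m..u. f k) = (\<Sum>k=m..<l. f k) + (\<Sum>k=l..u. f k)"
  by (metis atLeastLessThanSuc_atLeastAtMost sum.atLeastLessThan_concat)

lemma alg_stop_total: "alg_stop N x u \<Longrightarrow> N = (\<Sum>k=1..u. alg_nu_at x k)"
  using alg_N_eq[of N x "u + 1"] unfolding alg_stop_def
  by (simp add: atLeastLessThanSuc_atLeastAtMost flip: of_nat_sum)

lemma alg_stop_remaining_pos:
  assumes stop: "alg_stop N x u" and "N \<ge> 1" and l: "1 \<le> l" "l \<le> u"
  shows "0 < (\<Sum>k=l..u. alg_nu_at x k)"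
proof -
  have "alg_N N x l \<noteq> 0"
  proof (cases "l = 1")
    case True
    then show ?thesis using \<open>N \<ge> 1\<close> by (simp add: alg_N_def)
  next
    case False
    with l have "1 \<le> l - 1" "l - 1 < u" by auto
    with stop have "alg_N N x (l - 1 + 1) \<noteq> 0" unfolding alg_stop_def by blast
    with l show ?thesis by simp
  qed
  moreover have "N = (\<Sum>k=1..<l. alg_nu_at x k) + (\<Sum>k=l..u. alg_nu_at x k)"
    using alg_stop_total[OF stop] sum_atLeastAtMost_split[of 1 l u "alg_nu_at x"] l by simp
  ultimately show ?thesis
    using alg_N_eq[of N x l] by linarith
qed

lemma length_alg_x_ge_remaining:
  assumes "length x = 2 * N" and stop: "alg_stop N x u" and l: "1 \<le> l" "l \<le> u"
  shows "2 * (\<Sum>k=l..u. alg_nu_at x k) \<le> length (alg_x x l)"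
  using length_alg_x[OF l(1), of x] assms(1) alg_stop_total[OF stop]
    sum_atLeastAtMost_split[of 1 l u "alg_nu_at x"] l
  by simp

lemma sum_min_partial_sums:
  fixes \<mu> \<nu> :: "nat \<Rightarrow> real"
  assumes \<mu>: "\<forall>l\<in>{1..u}. 0 \<le> \<mu> l" and "i \<le> u"
  shows "(\<Sum>k=1..u. min (\<Sum>l=1..i. \<mu> l) (\<Sum>l=1..k. \<mu> l) * \<nu> k) = (\<Sum>l=1..i. \<mu> l * (\<Sum>k=l..u. \<nu> k))"
proof -
  have min: "min (\<Sum>l=1..i. \<mu> l) (\<Sum>l=1..k. \<mu> l) = (\<Sum>l=1..i. if l \<le> k then \<mu> l else 0)"
    if "k \<in> {1..u}" for k
  proof (cases "i \<le> k")
    case True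
    then have "(\<Sum>l=1..i. \<mu> l) \<le> (\<Sum>l=1..k. \<mu> l)"
      using \<mu> that by (intro sum_mono2) auto
    with True show ?thesis by (simp add: min_def)
  next
    case False
    then have "(\<Sum>l=1..k. \<mu> l) \<le> (\<Sum>l=1..i. \<mu> l)"
      using \<mu> \<open>i \<le> u\<close> by (intro sum_mono2) auto
    moreover have "(\<Sum>l=1..i. if l \<le> k then \<mu> l else 0) = (\<Sum>l=1..k. \<mu> l)"
    proof -
      have "{l \<in> {1..i}. l \<le> k} = {1..k}" using False by auto
      then show ?thesis by (simp flip: sum.inter_filter)
    qed
    ultimately show ?thesis by (simp add: min_def)
  qed
  have "(\<Sum>k=1..u. min (\<Sum>l=1..i. \<mu> l) (\<Sum>l=1..k. \<mu> l) * \<nu> k)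
      = (\<Sum>k=1..u. \<Sum>l=1..i. if l \<le> k then \<mu> l * \<nu> k else 0)"
  proof (intro sum.cong refl)
    fix k assume k: "k \<in> {1..u}"
    then show "min (\<Sum>l=1..i. \<mu> l) (\<Sum>l=1..k. \<mu> l) * \<nu> k
        = (\<Sum>l=1..i. if l \<le> k then \<mu> l * \<nu> k else 0)"
      unfolding min[OF k] sum_distrib_right by (intro sum.cong) auto
  qed
  also have "\<dots> = (\<Sum>l=1..i. \<Sum>k=1..u. if l \<le> k then \<mu> l * \<nu> k else 0)"
    by (rule sum.swap)
  also have "\<dots> = (\<Sum>l=1..i. \<mu> l * (\<Sum>k=l..u. \<nu> k))"
  proof (intro sum.cong refl)
    fix l assume "l \<in> {1..i}"
    then have "{k \<in> {1..u}. l \<le> k} = {l..u}" by auto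
    then show "(\<Sum>k=1..u. if l \<le> k then \<mu> l * \<nu> k else 0) = \<mu> l * (\<Sum>k=l..u. \<nu> k)"
      by (simp add: sum_distrib_left flip: sum.inter_filter)
  qed
  finally show ?thesis .
qed

lemma sum_list_take_bounds:
  fixes ys :: "'a::ordered_comm_monoid_add list"
  assumes "\<forall>v\<in>set ys. 0 \<le> v"
  shows "0 \<le> sum_list (take p ys) \<and> sum_list (take p ys) \<le> sum_list ys"
proof -
  have "0 \<le> sum_list (take p ys)" "0 \<le> sum_list (drop p ys)"
    using assms by (auto intro!: sum_list_nonneg dest: in_set_takeD in_set_dropD)
  moreover have "sum_list ys = sum_list (take p ys) + sum_list (drop p ys)"
    by (metis append_take_drop_id sum_list_append)
  ultimately show ?thesis by (simp add: add_increasing2)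
qed

lemma alg_mu_at_nonneg:
  assumes "length x = 2 * N" and "\<forall>v\<in>set x. 0 \<le> v" and "alg_stop N x u" and "N \<ge> 1"
    and "1 \<le> l" "l \<le> u"
  shows "0 \<le> alg_mu_at x l"
proof -
  have "alg_x x l \<noteq> []"
    using length_alg_x_ge_remaining[of x N u l] alg_stop_remaining_pos[of N x u l] assms by auto
  then show ?thesis using alg_mu_nonneg alg_x_nonneg assms(2,5) by blast
qed

lemma sum_list_alg_y_le_remaining:
  assumes "length x = 2 * N" and x: "\<forall>v\<in>set x. 0 \<le> v" and "alg_stop N x u" and "N \<ge> 1"
    and i: "1 \<le> i" "i \<le> u"
  shows "sum_list (alg_y (alg_x x i))
           \<le> sum_list x - 2 * (\<Sum>l=1..i. alg_mu_at x l * (\<Sum>k=l..u. real (alg_nu_at x k)))"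
proof -
  have "2 * (\<Sum>l=1..i. alg_mu_at x l * (\<Sum>k=l..u. real (alg_nu_at x k)))
      = (\<Sum>l=1..i. real (2 * (\<Sum>k=l..u. alg_nu_at x k)) * alg_mu_at x l)"
    by (simp add: sum_distrib_left mult_ac)
  also have "\<dots> \<le> (\<Sum>l=1..i. real (length (alg_x x l)) * alg_mu_at x l)"
  proof (intro sum_mono mult_right_mono)
    fix l assume "l \<in> {1..i}"
    with i show "real (2 * (\<Sum>k=l..u. alg_nu_at x k)) \<le> real (length (alg_x x l))"
      unfolding of_nat_le_iff using length_alg_x_ge_remaining[OF assms(1,3)] by auto
    from \<open>l \<in> {1..i}\<close> i show "0 \<le> alg_mu_at x l"
      using alg_mu_at_nonneg[OF assms(1-4)] by auto
  qed
  finally show ?thesis using sum_list_alg_y_alg_x[OF x i(1)] by simp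
qed

theorem mainTheorem10:
  fixes L :: real and N u :: nat and x :: "real list"
  assumes "L > 0" and "N \<ge> 1" and "length x = 2 * N"
    and "\<forall>a \<in> set x. a > 0" and "hw_cond x" and "sum_list x \<le> L"
    and "alg_stop N x u"
  shows "\<forall>i j. 1 \<le> i \<and> i \<le> u \<and> 1 \<le> j \<and> j \<le> length (run_starts (alg_y (alg_x x i))) \<longrightarrow>
           0 \<le> sum_list (take (run_starts (alg_y (alg_x x i)) ! (j - 1)) (alg_y (alg_x x i)))
           \<and> sum_list (take (run_starts (alg_y (alg_x x i)) ! (j - 1)) (alg_y (alg_x x i)))
               \<le> alg_q L x u i"
proof (intro allI impI)
  fix i j
  assume "1 \<le> i \<and> i \<le> u \<and> 1 \<le> j \<and> j \<le> length (run_starts (alg_y (alg_x x i)))"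
  then have i: "1 \<le> i" "i \<le> u" by auto
  have x: "\<forall>v\<in>set x. 0 \<le> v" using assms(4) by (auto intro: less_imp_le)
  have "sum_list (alg_y (alg_x x i))
      \<le> L - 2 * (\<Sum>l=1..i. alg_mu_at x l * (\<Sum>k=l..u. real (alg_nu_at x k)))"
    using sum_list_alg_y_le_remaining[OF assms(3) x assms(7,2) i] assms(6) by simp
  also have "\<dots> = alg_q L x u i"
    using sum_min_partial_sums[of u "alg_mu_at x" i "\<lambda>k. real (alg_nu_at x k)"]
      alg_mu_at_nonneg[OF assms(3) x assms(7,2)] i
    by (simp add: alg_q_def alg_lambda_def)
  finally show "0 \<le> sum_list (take (run_starts (alg_y (alg_x x i)) ! (j - 1)) (alg_y (alg_x x i)))
           \<and> sum_list (take (run_starts (alg_y (alg_x x i)) ! (j - 1)) (alg_y (alg_x x i)))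
               \<le> alg_q L x u i"
    using sum_list_take_bounds[OF alg_y_nonneg] by (meson order_trans)
qed

end
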